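(* Let $G$ be a finite non-abelian group. Then the non-centralizer graph $\Upsilon_G$ is not $n$-regular for any integer $n$ that is a power of a prime (i.e. $n=p^k$ with $p$ prime and $k\geq 1$).
   Context: For a finite group $G$, $C_G(x)$ denotes the centralizer of $x\in G$. The non-centralizer graph $\Upsilon_G$ is the simple graph with vertex set $G$ in which two distinct vertices $x,y$ are adjacent if and only if $C_G(x)\neq C_G(y)$. A graph is $n$-regular if every vertex has degree exactly $n$. *)

theory Defs
  imports "HOL-Algebra.Algebra"
begin

definition centralizer :: "('a, 'b) monoid_scheme \<Rightarrow> 'a \<Rightarrow> 'a set" where
  "centralizer G x = {y \<in> carrier G. x \<otimes>\<^bsub>G\<^esub> y = y \<otimes>\<^bsub>G\<^esub> x}"

definition noncent_adj :: "('a, 'b) monoid_scheme \<Rightarrow> 'a \<Rightarrow> 'a \<Rightarrow> bool" where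
  "noncent_adj G x y \<longleftrightarrow> x \<noteq> y \<and> centralizer G x \<noteq> centralizer G y"

definition noncent_degree :: "('a, 'b) monoid_scheme \<Rightarrow> 'a \<Rightarrow> nat" where
  "noncent_degree G x = card {y \<in> carrier G. noncent_adj G x y}"

definition noncent_regular :: "('a, 'b) monoid_scheme \<Rightarrow> nat \<Rightarrow> bool" where
  "noncent_regular G n \<longleftrightarrow> (\<forall>x \<in> carrier G. noncent_degree G x = n)"

end

theory Submission
  imports Defs
begin

text \<open>
  The degree of x in the non-centralizer graph is |G| minus the number of elements sharing
  the centralizer of x, and that number is at least |Z(G)| because x Z(G) is among them.
  Regularity therefore forces the elements with the centralizer of x to be exactly x Z(G);
  as x^-1 has the same centralizer as x, every square is central, and the common degree is
  |G| - |Z(G)|. If it equals p^k then |Z(G)| divides p^k.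
  For odd p the centre has odd order; since squares are central, every commutator is a
  central involution, hence trivial, and G is abelian. For p = 2 we have |Z(G)| = 2^a and
  |G| = 2^k + 2^a; the subgroup Z(G) \<union> x Z(G) for x outside the centre has order
  2^(a+1), which forces a = k, i.e. |G : Z(G)| = 2, impossible for a non-abelian group.
\<close>

definition center :: "('a, 'b) monoid_scheme \<Rightarrow> 'a set" where
  "center G = {z \<in> carrier G. \<forall>g \<in> carrier G. z \<otimes>\<^bsub>G\<^esub> g = g \<otimes>\<^bsub>G\<^esub> z}"

definition same_centralizer :: "('a, 'b) monoid_scheme \<Rightarrow> 'a \<Rightarrow> 'a set" where
  "same_centralizer G x = {y \<in> carrier G. centralizer G y = centralizer G x}"

lemma noncent_degree_eq:
  assumes "finite (carrier G)"
  shows "noncent_degree G x = card (carrier G) - card (same_centralizer G x)"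
proof -
  have "{y \<in> carrier G. noncent_adj G x y} = carrier G - same_centralizer G x"
    unfolding noncent_adj_def same_centralizer_def by blast
  moreover have "same_centralizer G x \<subseteq> carrier G"
    unfolding same_centralizer_def by blast
  ultimately show ?thesis
    unfolding noncent_degree_def using assms by (simp add: card_Diff_subset finite_subset)
qed

context group
begin

lemma center_subset: "center G \<subseteq> carrier G"
  unfolding center_def by blast

lemma center_commute: "z \<in> center G \<Longrightarrow> g \<in> carrier G \<Longrightarrow> z \<otimes> g = g \<otimes> z"
  unfolding center_def by blast

lemma card_subgroup_dvd_card:
  assumes "subgroup I G" "subgroup J G" "I \<subseteq> J"
  shows "card I dvd card J"
proof -
  have "group (G\<lparr>carrier := J\<rparr>)"
    using subgroup.subgroup_is_group[OF assms(2) is_group] .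
  moreover have "subgroup I (G\<lparr>carrier := J\<rparr>)"
    using subgroup_incl[OF assms] .
  ultimately have "card (rcosets\<^bsub>G\<lparr>carrier := J\<rparr>\<^esub> I) * card I = card J"
    using group.lagrange by (fastforce simp: order_def)
  then show ?thesis
    by (metis dvd_triv_right)
qed

lemma commute_inv:
  assumes x: "x \<in> carrier G" and g: "g \<in> carrier G" and comm: "x \<otimes> g = g \<otimes> x"
  shows "inv x \<otimes> g = g \<otimes> inv x"
proof -
  have "inv x \<otimes> g = inv x \<otimes> (g \<otimes> x \<otimes> inv x)"
    using x g by (simp add: m_assoc)
  also have "\<dots> = inv x \<otimes> (x \<otimes> g \<otimes> inv x)"
    by (simp only: comm)
  also have "\<dots> = g \<otimes> inv x"
    using x g by (simp add: m_assoc[symmetric])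
  finally show ?thesis .
qed

lemma center_subgroup: "subgroup (center G) G"
proof (rule subgroupI)
  fix z assume z: "z \<in> center G"
  then have "inv z \<otimes> g = g \<otimes> inv z" if "g \<in> carrier G" for g
    using that center_subset center_commute commute_inv by blast
  then show "inv z \<in> center G"
    using z center_subset unfolding center_def by blast
next
  fix z w assume z: "z \<in> center G" and w: "w \<in> center G"
  have zG: "z \<in> carrier G" and wG: "w \<in> carrier G"
    using z w center_subset by blast+
  have "z \<otimes> w \<otimes> g = g \<otimes> (z \<otimes> w)" if g: "g \<in> carrier G" for g
  proof -
    have "z \<otimes> w \<otimes> g = z \<otimes> g \<otimes> w"
      using zG wG g center_commute[OF w g] by (simp add: m_assoc)
    also have "\<dots> = g \<otimes> (z \<otimes> w)"
      using zG wG g center_commute[OF z g] by (simp add: m_assoc)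
    finally show ?thesis .
  qed
  then show "z \<otimes> w \<in> center G"
    using z w center_subset unfolding center_def by blast
qed (auto simp: center_def)

lemma center_eq_carrier_iff: "center G = carrier G \<longleftrightarrow> comm_group G"
  using group_comm_groupI comm_monoid.m_comm comm_group_def unfolding center_def by fastforce

lemma centralizer_eq_carrier_iff:
  "x \<in> carrier G \<Longrightarrow> centralizer G x = carrier G \<longleftrightarrow> x \<in> center G"
  unfolding centralizer_def center_def by blast

lemma same_centralizer_one: "same_centralizer G \<one> = center G"
proof -
  have "centralizer G \<one> = carrier G"
    unfolding centralizer_def by auto
  then show ?thesis
    using centralizer_eq_carrier_iff center_subset unfolding same_centralizer_def by blast
qed

lemma centralizer_mult_center:
  assumes x: "x \<in> carrier G" and z: "z \<in> center G"
  shows "centralizer G (x \<otimes> z) = centralizer G x"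
proof -
  have zG: "z \<in> carrier G" using z center_subset by blast
  have "x \<otimes> z \<otimes> y = y \<otimes> (x \<otimes> z) \<longleftrightarrow> x \<otimes> y = y \<otimes> x" if y: "y \<in> carrier G" for y
  proof -
    have "x \<otimes> z \<otimes> y = x \<otimes> y \<otimes> z" and "y \<otimes> (x \<otimes> z) = y \<otimes> x \<otimes> z"
      using center_commute[OF z y] x y zG by (simp_all add: m_assoc)
    then show ?thesis
      using x y zG by simp
  qed
  then show ?thesis
    unfolding centralizer_def by blast
qed

lemma centralizer_inv:
  assumes x: "x \<in> carrier G"
  shows "centralizer G (inv x) = centralizer G x"
proof -
  have "inv x \<otimes> y = y \<otimes> inv x \<longleftrightarrow> x \<otimes> y = y \<otimes> x" if y: "y \<in> carrier G" for y
    using commute_inv[OF x y] commute_inv[OF inv_closed[OF x] y] x by auto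
  then show ?thesis
    unfolding centralizer_def by blast
qed

lemma card_mult_center:
  assumes "x \<in> carrier G"
  shows "card ((\<lambda>z. x \<otimes> z) ` center G) = card (center G)"
  using assms inj_on_cmult center_subset by (blast intro: card_image inj_on_subset)

lemma mult_center_subset_same_centralizer:
  assumes "x \<in> carrier G"
  shows "(\<lambda>z. x \<otimes> z) ` center G \<subseteq> same_centralizer G x"
  using assms centralizer_mult_center center_subset unfolding same_centralizer_def by auto

lemma same_centralizer_eq_if_regular:
  assumes fin: "finite (carrier G)" and reg: "noncent_regular G n" and x: "x \<in> carrier G"
  shows "same_centralizer G x = (\<lambda>z. x \<otimes> z) ` center G"
proof -
  have sub: "same_centralizer G y \<subseteq> carrier G" for y
    unfolding same_centralizer_def by blast
  have "noncent_degree G x = noncent_degree G \<one>"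
    using reg x unfolding noncent_regular_def by simp
  then have "card (same_centralizer G x) = card (same_centralizer G \<one>)"
    using noncent_degree_eq[OF fin] card_mono[OF fin sub] by (metis diff_diff_cancel)
  then have "card (same_centralizer G x) = card ((\<lambda>z. x \<otimes> z) ` center G)"
    using card_mult_center[OF x] same_centralizer_one by simp
  then show ?thesis
    using card_subset_eq[OF finite_subset[OF sub fin] mult_center_subset_same_centralizer[OF x]]
    by simp
qed

lemma square_in_center_if_regular:
  assumes fin: "finite (carrier G)" and reg: "noncent_regular G n" and x: "x \<in> carrier G"
  shows "x \<otimes> x \<in> center G"
proof -
  have "inv x \<in> same_centralizer G x"
    using x centralizer_inv unfolding same_centralizer_def by simp
  then obtain z where z: "z \<in> center G" and inv_x: "inv x = x \<otimes> z"
    using same_centralizer_eq_if_regular[OF fin reg x] by blast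
  have zG: "z \<in> carrier G"
    using z center_subset by blast
  have "x \<otimes> x \<otimes> z = \<one>"
    using x zG inv_x by (metis m_assoc r_inv)
  then have "x \<otimes> x = inv z"
    using x zG by (metis inv_equality m_closed)
  then show ?thesis
    using z subgroup.m_inv_closed[OF center_subgroup] by simp
qed

lemma card_carrier_eq_if_regular:
  assumes fin: "finite (carrier G)" and reg: "noncent_regular G n"
  shows "card (carrier G) = n + card (center G)"
proof -
  have "noncent_degree G \<one> = n"
    using reg unfolding noncent_regular_def by simp
  then show ?thesis
    using noncent_degree_eq[OF fin] same_centralizer_one card_mono[OF fin center_subset] by simp
qed

lemma card_center_dvd_if_regular:
  assumes fin: "finite (carrier G)" and reg: "noncent_regular G n"
  shows "card (center G) dvd n"
proof -
  have "card (center G) dvd card (carrier G)"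
    using card_subgroup_dvd_card[OF center_subgroup subgroup_self center_subset] .
  then show ?thesis
    using card_carrier_eq_if_regular[OF fin reg] by simp
qed

lemma commutator_in_center_if_squares_central:
  assumes sq: "\<And>g. g \<in> carrier G \<Longrightarrow> g \<otimes> g \<in> center G"
    and x: "x \<in> carrier G" and y: "y \<in> carrier G"
  obtains c where "c \<in> center G" "x \<otimes> y = c \<otimes> (y \<otimes> x)" "c \<otimes> c = \<one>"
proof -
  define c where "c = x \<otimes> y \<otimes> inv (y \<otimes> x)"
  have cG: "c \<in> carrier G"
    unfolding c_def using x y by simp
  have xy: "x \<otimes> y = c \<otimes> (y \<otimes> x)"
    unfolding c_def using x y by (simp add: m_assoc)
  have inv_sq: "inv g = g \<otimes> inv (g \<otimes> g)" if "g \<in> carrier G" for g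
    using that by (simp add: inv_mult_group m_assoc[symmetric])
  have inv_sq_center: "inv (g \<otimes> g) \<in> center G" if "g \<in> carrier G" for g
    using that sq subgroup.m_inv_closed[OF center_subgroup] by blast
  have "c = x \<otimes> y \<otimes> (x \<otimes> inv (x \<otimes> x)) \<otimes> (y \<otimes> inv (y \<otimes> y))"
    unfolding c_def using x y inv_sq by (simp add: inv_mult_group m_assoc)
  also have "\<dots> = (x \<otimes> y) \<otimes> (x \<otimes> y) \<otimes> (inv (x \<otimes> x) \<otimes> inv (y \<otimes> y))"
  proof -
    have "inv (x \<otimes> x) \<otimes> (y \<otimes> inv (y \<otimes> y)) = y \<otimes> (inv (x \<otimes> x) \<otimes> inv (y \<otimes> y))"
      using x y center_commute[OF inv_sq_center[OF x] y] by (simp add: m_assoc[symmetric])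
    then show ?thesis
      using x y by (simp add: m_assoc)
  qed
  finally have c_center: "c \<in> center G"
    using x y sq inv_sq_center subgroup.m_closed[OF center_subgroup] by simp
  have "c \<otimes> c \<otimes> (y \<otimes> (x \<otimes> x)) = x \<otimes> (x \<otimes> y)"
    using x y cG xy center_commute[OF c_center x] by (metis m_assoc m_closed)
  also have "\<dots> = y \<otimes> (x \<otimes> x)"
    using x y center_commute[OF sq[OF x] y] by (simp add: m_assoc)
  finally have "c \<otimes> c = \<one>"
    using x y cG by (metis l_one m_closed one_closed r_cancel)
  then show thesis
    using that c_center xy by blast
qed

lemma involution_trivial_if_odd_subgroup:
  assumes H: "subgroup H G" and odd: "odd (card H)"
    and d: "d \<in> H" and dd: "d \<otimes> d = \<one>"
  shows "d = \<one>"
proof (rule ccontr)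
  assume "d \<noteq> \<one>"
  have dG: "d \<in> carrier G"
    using d subgroup.subset[OF H] by blast
  have "subgroup {\<one>, d} G"
  proof (rule subgroupI)
    show "inv a \<in> {\<one>, d}" if "a \<in> {\<one>, d}" for a
      using that dG dd inv_equality[of d d] by auto
  qed (use dG dd in auto)
  moreover have "{\<one>, d} \<subseteq> H"
    using d subgroup.one_closed[OF H] by blast
  ultimately have "card {\<one>, d} dvd card H"
    using card_subgroup_dvd_card[OF _ H] by blast
  moreover have "card {\<one>, d} = 2"
    using \<open>d \<noteq> \<one>\<close> by simp
  ultimately show False
    using odd by simp
qed

lemma comm_group_if_squares_central_odd_center:
  assumes sq: "\<And>g. g \<in> carrier G \<Longrightarrow> g \<otimes> g \<in> center G"
    and odd: "odd (card (center G))"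
  shows "comm_group G"
proof (rule group_comm_groupI)
  fix x y assume x: "x \<in> carrier G" and y: "y \<in> carrier G"
  obtain c where c: "c \<in> center G" "c \<otimes> c = \<one>" and xy: "x \<otimes> y = c \<otimes> (y \<otimes> x)"
    using commutator_in_center_if_squares_central[OF sq x y] .
  have "c = \<one>"
    using involution_trivial_if_odd_subgroup[OF center_subgroup odd c] .
  then show "x \<otimes> y = y \<otimes> x"
    using xy x y by simp
qed

lemma subgroup_center_Un_coset:
  assumes x: "x \<in> carrier G" and sq: "x \<otimes> x \<in> center G"
  shows "subgroup (center G \<union> (\<lambda>z. x \<otimes> z) ` center G) G"
proof -
  let ?Z = "center G" and ?K = "center G \<union> (\<lambda>z. x \<otimes> z) ` center G"
  have Z: "subgroup ?Z G"
    by (rule center_subgroup)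
  have ZG: "z \<in> carrier G" if "z \<in> ?Z" for z
    using that center_subset by blast
  show ?thesis
  proof (rule subgroupI)
    show "?K \<subseteq> carrier G"
      using x ZG by blast
    show "?K \<noteq> {}"
      using subgroup.one_closed[OF Z] by blast
  next
    fix a assume "a \<in> ?K"
    then consider "a \<in> ?Z" | z where "z \<in> ?Z" "a = x \<otimes> z"
      by blast
    then show "inv a \<in> ?K"
    proof cases
      case 1
      then show ?thesis
        using subgroup.m_inv_closed[OF Z] by blast
    next
      case (2 z)
      have zG: "z \<in> carrier G" and inv_z: "inv z \<in> ?Z"
        using 2 ZG subgroup.m_inv_closed[OF Z] by blast+
      have "x \<otimes> inv (x \<otimes> x \<otimes> z) = x \<otimes> (inv z \<otimes> (inv x \<otimes> inv x))"
        using x zG by (simp add: inv_mult_group m_assoc)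
      also have "\<dots> = inv z \<otimes> (x \<otimes> (inv x \<otimes> inv x))"
        using x zG center_commute[OF inv_z x]
        by (simp only: m_assoc[symmetric] inv_closed m_closed)
      also have "\<dots> = inv a"
        using 2 x zG by (simp add: inv_mult_group m_assoc[symmetric])
      moreover have "inv (x \<otimes> x \<otimes> z) \<in> ?Z"
        using 2 sq subgroup.m_inv_closed[OF Z] subgroup.m_closed[OF Z] by blast
      ultimately show ?thesis
        by (metis UnI2 image_eqI)
    qed
  next
    have center_mult: "z \<otimes> k \<in> ?K" if z: "z \<in> ?Z" and k: "k \<in> ?K" for z k
    proof (cases "k \<in> ?Z")
      case True
      then show ?thesis
        using z subgroup.m_closed[OF Z] by blast
    next
      case False
      then obtain w where w: "w \<in> ?Z" "k = x \<otimes> w"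
        using k by blast
      then have "z \<otimes> k = x \<otimes> (z \<otimes> w)"
        using x z ZG center_commute[OF z x] by (simp add: m_assoc[symmetric])
      then show ?thesis
        using z w subgroup.m_closed[OF Z] by blast
    qed
    have x_mult: "x \<otimes> k \<in> ?K" if k: "k \<in> ?K" for k
    proof (cases "k \<in> ?Z")
      case True
      then show ?thesis
        by blast
    next
      case False
      then obtain w where w: "w \<in> ?Z" "k = x \<otimes> w"
        using k by blast
      then have "x \<otimes> k = x \<otimes> x \<otimes> w"
        using x ZG by (simp add: m_assoc)
      then show ?thesis
        using sq w subgroup.m_closed[OF Z] by simp
    qed
    fix a b assume a: "a \<in> ?K" and b: "b \<in> ?K"
    show "a \<otimes> b \<in> ?K"
    proof (cases "a \<in> ?Z")
      case True
      then show ?thesis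
        using center_mult b by blast
    next
      case False
      then obtain z where z: "z \<in> ?Z" "a = x \<otimes> z"
        using a by blast
      moreover have "b \<in> carrier G"
        using b x ZG by blast
      ultimately have "a \<otimes> b = x \<otimes> (z \<otimes> b)"
        using x ZG by (simp add: m_assoc)
      then show ?thesis
        using x_mult center_mult z b by simp
    qed
  qed
qed

lemma card_center_Un_coset:
  assumes fin: "finite (carrier G)" and x: "x \<in> carrier G" "x \<notin> center G"
  shows "card (center G \<union> (\<lambda>z. x \<otimes> z) ` center G) = 2 * card (center G)"
proof -
  have fin_Z: "finite (center G)"
    using finite_subset[OF center_subset fin] .
  have "center G \<inter> (\<lambda>z. x \<otimes> z) ` center G = {}"
  proof (rule ccontr)
    assume "center G \<inter> (\<lambda>z. x \<otimes> z) ` center G \<noteq> {}"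
    then obtain z where z: "z \<in> center G" and xz: "x \<otimes> z \<in> center G"
      by blast
    have "x \<otimes> z \<otimes> inv z \<in> center G"
      using xz z subgroup.m_closed[OF center_subgroup] subgroup.m_inv_closed[OF center_subgroup]
      by blast
    then have "x \<in> center G"
      using x z center_subset by (auto simp: m_assoc)
    then show False
      using x by blast
  qed
  then show ?thesis
    using card_Un_disjoint[OF fin_Z finite_imageI[OF fin_Z]] card_mult_center[OF x(1)] by simp
qed

lemma card_carrier_ne_double_card_center:
  assumes fin: "finite (carrier G)" and nc: "\<not> comm_group G"
  shows "card (carrier G) \<noteq> 2 * card (center G)"
proof
  assume card_G: "card (carrier G) = 2 * card (center G)"
  obtain x where x: "x \<in> carrier G" "x \<notin> center G"
    using nc center_eq_carrier_iff center_subset by blast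
  let ?K = "center G \<union> (\<lambda>z. x \<otimes> z) ` center G"
  have "?K \<subseteq> carrier G"
    using x center_subset by blast
  then have K: "?K = carrier G"
    using card_subset_eq[OF fin] card_center_Un_coset[OF fin x] card_G by simp
  have "x \<otimes> g = g \<otimes> x" if g: "g \<in> carrier G" for g
  proof -
    consider "g \<in> center G" | z where "z \<in> center G" "g = x \<otimes> z"
      using g K by blast
    then show ?thesis
    proof cases
      case 1
      then show ?thesis
        using center_commute[OF 1 x(1)] by simp
    next
      case (2 z)
      then show ?thesis
        using x(1) center_commute[OF 2(1) x(1)] center_subset by (auto simp: m_assoc)
    qed
  qed
  then show False
    using x unfolding center_def by blast
qed

lemma double_card_center_dvd_card:
  assumes fin: "finite (carrier G)" and nc: "\<not> comm_group G"
    and sq: "\<And>g. g \<in> carrier G \<Longrightarrow> g \<otimes> g \<in> center G"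
  shows "2 * card (center G) dvd card (carrier G)"
proof -
  obtain x where x: "x \<in> carrier G" "x \<notin> center G"
    using nc center_eq_carrier_iff center_subset by blast
  have K: "subgroup (center G \<union> (\<lambda>z. x \<otimes> z) ` center G) G"
    using subgroup_center_Un_coset[OF x(1) sq[OF x(1)]] .
  show ?thesis
    using card_subgroup_dvd_card[OF K subgroup_self subgroup.subset[OF K]]
    unfolding card_center_Un_coset[OF fin x] .
qed

end

lemma mult_pow_dvd_pow_add_pow_imp_eq:
  fixes p :: nat
  assumes "1 < p" and "a \<le> k" and dvd: "p * p ^ a dvd p ^ k + p ^ a"
  shows "k = a"
proof (rule ccontr)
  assume "k \<noteq> a"
  then have "p dvd p ^ (k - a)"
    using assms(2) by simp
  have split: "p ^ k + p ^ a = p ^ a * (p ^ (k - a) + 1)"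
    using assms(2) by (simp add: algebra_simps flip: power_add)
  have "p ^ a * p dvd p ^ a * (p ^ (k - a) + 1)"
    using dvd unfolding split by (simp only: mult.commute[of p])
  moreover have "p ^ a \<noteq> 0"
    using assms(1) by simp
  ultimately have "p dvd p ^ (k - a) + 1"
    using dvd_times_left_cancel_iff by blast
  then have "p dvd 1"
    using \<open>p dvd p ^ (k - a)\<close> dvd_add_right_iff by blast
  then show False
    using assms(1) by simp
qed

theorem corollary2p11:
  fixes G :: "('a, 'b) monoid_scheme" and p k :: nat
  assumes "group G" and "finite (carrier G)" and "\<not> comm_group G"
    and "Factorial_Ring.prime p" and "k \<ge> 1"
  shows "\<not> noncent_regular G (p ^ k)"
proof
  assume reg: "noncent_regular G (p ^ k)"
  interpret group G by fact
  have sq: "\<And>g. g \<in> carrier G \<Longrightarrow> g \<otimes>\<^bsub>G\<^esub> g \<in> center G"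
    using square_in_center_if_regular[OF assms(2) reg] .
  have card_G: "card (carrier G) = p ^ k + card (center G)"
    using card_carrier_eq_if_regular[OF assms(2) reg] .
  have Z_dvd: "card (center G) dvd p ^ k"
    using card_center_dvd_if_regular[OF assms(2) reg] .
  show False
  proof (cases "p = 2")
    case True
    then obtain a where a_le: "a \<le> k" and card_Z: "card (center G) = 2 ^ a"
      using Z_dvd divides_primepow_nat[OF assms(4)] by blast
    have "2 * 2 ^ a dvd 2 ^ k + (2::nat) ^ a"
      using double_card_center_dvd_card[OF assms(2,3) sq] card_G card_Z True by simp
    then have "k = a"
      using mult_pow_dvd_pow_add_pow_imp_eq[where p = 2, OF _ a_le] by simp
    then show False
      using card_carrier_ne_double_card_center[OF assms(2,3)] card_G card_Z True by simp
  next
    case False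
    then have "odd (p ^ k)"
      using prime_odd_nat[OF assms(4)] prime_ge_2_nat[OF assms(4)] by simp
    then have "odd (card (center G))"
      using Z_dvd dvd_trans by blast
    then show False
      using comm_group_if_squares_central_odd_center[OF sq] assms(3) by blast
  qed
qed

end
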